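(* Let $\alpha,\beta$ be real with $4\alpha-\beta^2>0$, and let $\Omega\subseteq\mathbb{R}^2$ be an open connected set. Suppose $f_n:\Omega\to\mathbb{C}(\alpha,\beta)$, $n\geq0$, are holomorphic and the sequence $(f_n)$ converges to a function $f$, uniformly on every compact subset of $\Omega$. Then $f$ is holomorphic in $\Omega$.
   Context: $\mathbb{C}(\alpha,\beta)$ denotes the real algebra of numbers $z=x+iy$ with $i^2=-\alpha-\beta i$ (product $(x_1+iy_1)(x_2+iy_2)=(x_1x_2-\alpha y_1y_2)+i(x_1y_2+x_2y_1-\beta y_1y_2)$), identified with $\mathbb{R}^2$ and carrying the Euclidean topology. A function $f=u+iv$ on $\Omega$ ($u,v$ real, continuously differentiable) is holomorphic if $\partial_{\bar z}f:=\tfrac12(\partial_xf+i\partial_yf)=0$, i.e. $\partial_xu-\alpha\partial_yv=0$ and $\partial_yu+\partial_xv-\beta\partial_yv=0$. *)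

theory Defs
  imports "HOL-Analysis.Analysis"
begin

text \<open>Elements x + i y of C(alpha,beta) are represented as pairs (x, y) :: real \<times> real,
  i.e. the algebra is identified with R^2 carrying the Euclidean topology.
  A function f = u + i v on Omega is given as f :: real \<times> real \<Rightarrow> real \<times> real
  with u = fst o f and v = snd o f.\<close>

definition cab_mult :: "real \<Rightarrow> real \<Rightarrow> real \<times> real \<Rightarrow> real \<times> real \<Rightarrow> real \<times> real" where
  "cab_mult \<alpha> \<beta> z w =
     (fst z * fst w - \<alpha> * snd z * snd w,
      fst z * snd w + fst w * snd z - \<beta> * snd z * snd w)"

text \<open>Holomorphic in the sense of C(alpha,beta): u, v continuously differentiable on Omega
  (differentiable at each point with continuous partial derivatives) and
  u_x - alpha v_y = 0, u_y + v_x - beta v_y = 0.  Partial derivatives are the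
  Frechet derivative applied to (1,0) resp. (0,1).\<close>

definition cab_holomorphic_on ::
  "real \<Rightarrow> real \<Rightarrow> (real \<times> real) set \<Rightarrow> (real \<times> real \<Rightarrow> real \<times> real) \<Rightarrow> bool" where
  "cab_holomorphic_on \<alpha> \<beta> \<Omega> f \<longleftrightarrow>
     (\<exists>u' v'.
        (\<forall>z\<in>\<Omega>. ((\<lambda>p. fst (f p)) has_derivative u' z) (at z) \<and>
                  ((\<lambda>p. snd (f p)) has_derivative v' z) (at z)) \<and>
        continuous_on \<Omega> (\<lambda>z. u' z (1, 0)) \<and> continuous_on \<Omega> (\<lambda>z. u' z (0, 1)) \<and>
        continuous_on \<Omega> (\<lambda>z. v' z (1, 0)) \<and> continuous_on \<Omega> (\<lambda>z. v' z (0, 1)) \<and>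
        (\<forall>z\<in>\<Omega>. u' z (1, 0) - \<alpha> * v' z (0, 1) = 0 \<and>
                  u' z (0, 1) + v' z (1, 0) - \<beta> * v' z (0, 1) = 0))"

end

theory Submission
  imports Defs "HOL-Complex_Analysis.Complex_Analysis"
begin

text \<open>Put \<gamma> = sqrt (\<alpha> - \<beta>^2/4). Then (i + \<beta>/2)/\<gamma> squares to -1 in C(\<alpha>,\<beta>), so
  x + iy \<mapsto> (x - \<beta>y/2) + \<gamma>y\<i> is an isomorphism of algebras C(\<alpha>,\<beta>) \<cong> \<complex>. Composing with it on
  the target and with a suitable real-linear change of coordinates on the source turns the
  C(\<alpha>,\<beta>)-holomorphic functions on \<Omega> into exactly the holomorphic functions on an open subset of \<complex>,
  and preserves locally uniform convergence. The theorem thus reduces to Weierstrass' theorem on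
  locally uniform limits of holomorphic functions.\<close>

definition cab_to_complex :: "real \<Rightarrow> real \<Rightarrow> real \<times> real \<Rightarrow> complex" where
  "cab_to_complex \<beta> \<gamma> p = Complex (fst p - \<beta>/2 * snd p) (\<gamma> * snd p)"

definition complex_to_cab :: "real \<Rightarrow> real \<Rightarrow> complex \<Rightarrow> real \<times> real" where
  "complex_to_cab \<beta> \<gamma> w = (Re w + \<beta>/(2*\<gamma>) * Im w, Im w / \<gamma>)"

text \<open>The equation \<partial>f/\<partial>x + i \<partial>f/\<partial>y = 0 says df(x,y) = (y - xi) \<partial>f/\<partial>y in C(\<alpha>,\<beta>), and
  \<open>cab_to_complex\<close> maps y - xi to -\<i> \<cdot> \<open>cab_chart_inv\<close> (x,y).\<close>

definition cab_chart_inv :: "real \<Rightarrow> real \<Rightarrow> real \<times> real \<Rightarrow> complex" where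
  "cab_chart_inv \<beta> \<gamma> p = Complex (\<gamma> * fst p) (snd p + \<beta>/2 * fst p)"

definition cab_chart :: "real \<Rightarrow> real \<Rightarrow> complex \<Rightarrow> real \<times> real" where
  "cab_chart \<beta> \<gamma> w = (Re w / \<gamma>, Im w - \<beta>/(2*\<gamma>) * Re w)"

definition cab_transfer ::
  "real \<Rightarrow> real \<Rightarrow> (real \<times> real \<Rightarrow> real \<times> real) \<Rightarrow> complex \<Rightarrow> complex" where
  "cab_transfer \<beta> \<gamma> f = cab_to_complex \<beta> \<gamma> \<circ> f \<circ> cab_chart \<beta> \<gamma>"

definition cab_cauchy_riemann :: "real \<Rightarrow> real \<Rightarrow> (real \<times> real \<Rightarrow> real \<times> real) \<Rightarrow> bool" where
  "cab_cauchy_riemann \<alpha> \<beta> L \<longleftrightarrow>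
     fst (L (1,0)) - \<alpha> * snd (L (0,1)) = 0 \<and>
     fst (L (0,1)) + snd (L (1,0)) - \<beta> * snd (L (0,1)) = 0"

lemma complex_to_cab_cab_to_complex: "\<gamma> \<noteq> 0 \<Longrightarrow> complex_to_cab \<beta> \<gamma> (cab_to_complex \<beta> \<gamma> p) = p"
  by (simp add: complex_to_cab_def cab_to_complex_def prod_eq_iff)

lemma cab_to_complex_complex_to_cab: "\<gamma> \<noteq> 0 \<Longrightarrow> cab_to_complex \<beta> \<gamma> (complex_to_cab \<beta> \<gamma> w) = w"
  by (simp add: complex_to_cab_def cab_to_complex_def complex_eq_iff)

lemma cab_chart_inv_cab_chart: "\<gamma> \<noteq> 0 \<Longrightarrow> cab_chart_inv \<beta> \<gamma> (cab_chart \<beta> \<gamma> w) = w"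
  by (simp add: cab_chart_inv_def cab_chart_def complex_eq_iff)

lemma cab_chart_cab_chart_inv: "\<gamma> \<noteq> 0 \<Longrightarrow> cab_chart \<beta> \<gamma> (cab_chart_inv \<beta> \<gamma> p) = p"
  by (simp add: cab_chart_inv_def cab_chart_def prod_eq_iff)

lemma bounded_linear_cab_to_complex: "bounded_linear (cab_to_complex \<beta> \<gamma>)"
  unfolding linear_conv_bounded_linear[symmetric]
  by (rule linearI) (auto simp: cab_to_complex_def complex_eq_iff algebra_simps)

lemma bounded_linear_complex_to_cab: "bounded_linear (complex_to_cab \<beta> \<gamma>)"
  unfolding linear_conv_bounded_linear[symmetric]
  by (rule linearI) (auto simp: complex_to_cab_def algebra_simps add_divide_distrib)

lemma bounded_linear_cab_chart_inv: "bounded_linear (cab_chart_inv \<beta> \<gamma>)"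
  unfolding linear_conv_bounded_linear[symmetric]
  by (rule linearI) (auto simp: cab_chart_inv_def complex_eq_iff algebra_simps)

lemma bounded_linear_cab_chart: "bounded_linear (cab_chart \<beta> \<gamma>)"
  unfolding linear_conv_bounded_linear[symmetric]
  by (rule linearI) (auto simp: cab_chart_def algebra_simps add_divide_distrib)

lemma open_vimage_cab_chart: "open \<Omega> \<Longrightarrow> open (cab_chart \<beta> \<gamma> -` \<Omega>)"
  by (rule open_vimage[OF _ linear_continuous_on[OF bounded_linear_cab_chart]])

lemma cab_holomorphic_onD:
  assumes "cab_holomorphic_on \<alpha> \<beta> \<Omega> f" "z \<in> \<Omega>"
  obtains L where "(f has_derivative L) (at z)" "cab_cauchy_riemann \<alpha> \<beta> L"
proof -
  obtain u' v' where du: "((\<lambda>p. fst (f p)) has_derivative u' z) (at z)"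
    and dv: "((\<lambda>p. snd (f p)) has_derivative v' z) (at z)"
    and cr: "u' z (1, 0) - \<alpha> * v' z (0, 1) = 0" "u' z (0, 1) + v' z (1, 0) - \<beta> * v' z (0, 1) = 0"
    using assms unfolding cab_holomorphic_on_def by blast
  have "(f has_derivative (\<lambda>k. (u' z k, v' z k))) (at z)"
    using has_derivative_Pair[OF du dv] by simp
  moreover have "cab_cauchy_riemann \<alpha> \<beta> (\<lambda>k. (u' z k, v' z k))"
    using cr by (simp add: cab_cauchy_riemann_def)
  ultimately show ?thesis
    by (rule that)
qed

lemma cab_holomorphic_onI:
  assumes "\<And>z. z \<in> \<Omega> \<Longrightarrow> (f has_derivative L z) (at z)"
    and "\<And>k. continuous_on \<Omega> (\<lambda>z. L z k)"
    and "\<And>z. z \<in> \<Omega> \<Longrightarrow> cab_cauchy_riemann \<alpha> \<beta> (L z)"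
  shows "cab_holomorphic_on \<alpha> \<beta> \<Omega> f"
proof -
  have "((\<lambda>p. fst (f p)) has_derivative (\<lambda>k. fst (L z k))) (at z) \<and>
        ((\<lambda>p. snd (f p)) has_derivative (\<lambda>k. snd (L z k))) (at z)" if "z \<in> \<Omega>" for z
    using has_derivative_fst[OF assms(1)[OF that]] has_derivative_snd[OF assms(1)[OF that]] by blast
  moreover have "continuous_on \<Omega> (\<lambda>z. fst (L z k))" "continuous_on \<Omega> (\<lambda>z. snd (L z k))" for k
    using continuous_on_fst[OF assms(2)] continuous_on_snd[OF assms(2)] by auto
  ultimately show ?thesis
    using assms(3) unfolding cab_holomorphic_on_def cab_cauchy_riemann_def
    by (intro exI[of _ "\<lambda>z k. fst (L z k)"] exI[of _ "\<lambda>z k. snd (L z k)"]) blast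
qed

lemma linear_on_prod_basis:
  assumes "linear (L :: real \<times> real \<Rightarrow> 'a::real_vector)"
  shows "L k = fst k *\<^sub>R L (1,0) + snd k *\<^sub>R L (0,1)"
proof -
  have "L k = L (fst k *\<^sub>R (1,0) + snd k *\<^sub>R (0,1))"
    by (simp add: prod_eq_iff)
  also have "\<dots> = fst k *\<^sub>R L (1,0) + snd k *\<^sub>R L (0,1)"
    by (simp only: linear_add[OF assms] linear_scale[OF assms])
  finally show ?thesis .
qed

lemma cab_cauchy_riemann_iff_complex_mult:
  assumes "linear L" "\<gamma> \<noteq> 0" "\<gamma>^2 + \<beta>^2/4 = \<alpha>"
  shows "cab_cauchy_riemann \<alpha> \<beta> L \<longleftrightarrow>
           (\<exists>c. \<forall>k. cab_to_complex \<beta> \<gamma> (L k) = c * cab_chart_inv \<beta> \<gamma> k)"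
proof -
  obtain u1 v1 u2 v2 where L10: "L (1,0) = (u1, v1)" and L01: "L (0,1) = (u2, v2)"
    by (metis prod.exhaust)
  have L: "L k = (fst k * u1 + snd k * u2, fst k * v1 + snd k * v2)" for k
    using linear_on_prod_basis[OF assms(1), of k] by (simp add: L10 L01)
  show ?thesis
  proof
    assume "cab_cauchy_riemann \<alpha> \<beta> L"
    then have u1: "u1 = (\<gamma>^2 + \<beta>^2/4) * v2" and u2: "u2 = \<beta> * v2 - v1"
      using assms(3) by (simp_all add: cab_cauchy_riemann_def L10 L01)
    have "cab_to_complex \<beta> \<gamma> (L k) = Complex (\<gamma> * v2) (v1 - \<beta>/2 * v2) * cab_chart_inv \<beta> \<gamma> k" for k
      unfolding L u1 u2 by (simp add: cab_to_complex_def cab_chart_inv_def complex_eq_iff algebra_simps power2_eq_square)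
    then show "\<exists>c. \<forall>k. cab_to_complex \<beta> \<gamma> (L k) = c * cab_chart_inv \<beta> \<gamma> k" by blast
  next
    assume "\<exists>c. \<forall>k. cab_to_complex \<beta> \<gamma> (L k) = c * cab_chart_inv \<beta> \<gamma> k"
    then obtain c where c: "\<And>k. cab_to_complex \<beta> \<gamma> (L k) = c * cab_chart_inv \<beta> \<gamma> k" by blast
    have re: "Re c = \<gamma> * v2" and im: "Im c = \<beta>/2 * v2 - u2"
      using c[of "(0,1)"] by (simp_all add: L01 cab_to_complex_def cab_chart_inv_def complex_eq_iff)
    have "u1 - \<beta>/2 * v1 = \<gamma> * Re c - \<beta>/2 * Im c" "v1 = \<beta>/2 * Re c / \<gamma> + Im c"
      using c[of "(1,0)"] assms(2) by (simp_all add: L10 cab_to_complex_def cab_chart_inv_def complex_eq_iff field_simps)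
    then have "v1 = \<beta> * v2 - u2" "u1 = \<alpha> * v2"
      unfolding re im using assms(2) by (simp_all add: field_simps power2_eq_square flip: assms(3))
    then show "cab_cauchy_riemann \<alpha> \<beta> L"
      by (simp add: cab_cauchy_riemann_def L10 L01)
  qed
qed


lemma holomorphic_on_cab_transfer:
  assumes "\<gamma> \<noteq> 0" "\<gamma>^2 + \<beta>^2/4 = \<alpha>" "open \<Omega>" "cab_holomorphic_on \<alpha> \<beta> \<Omega> f"
  shows "cab_transfer \<beta> \<gamma> f holomorphic_on cab_chart \<beta> \<gamma> -` \<Omega>"
proof -
  have "\<exists>c. (cab_transfer \<beta> \<gamma> f has_field_derivative c) (at w)" if w: "cab_chart \<beta> \<gamma> w \<in> \<Omega>" for w
  proof -
    obtain L where L: "(f has_derivative L) (at (cab_chart \<beta> \<gamma> w))" "cab_cauchy_riemann \<alpha> \<beta> L"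
      using cab_holomorphic_onD[OF assms(4) w] by blast
    then obtain c where c: "\<And>k. cab_to_complex \<beta> \<gamma> (L k) = c * cab_chart_inv \<beta> \<gamma> k"
      using cab_cauchy_riemann_iff_complex_mult[OF has_derivative_linear assms(1,2)] by blast
    have "(cab_transfer \<beta> \<gamma> f has_derivative cab_to_complex \<beta> \<gamma> \<circ> L \<circ> cab_chart \<beta> \<gamma>) (at w)"
      unfolding cab_transfer_def
      by (intro diff_chain_at L(1) bounded_linear_imp_has_derivative
          bounded_linear_cab_chart bounded_linear_cab_to_complex)
    also have "cab_to_complex \<beta> \<gamma> \<circ> L \<circ> cab_chart \<beta> \<gamma> = (*) c"
      using c by (simp add: fun_eq_iff cab_chart_inv_cab_chart assms(1))
    finally show ?thesis
      unfolding has_field_derivative_def by blast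
  qed
  then show ?thesis
    by (simp add: holomorphic_on_open open_vimage_cab_chart assms(3))
qed

lemma cab_holomorphic_on_of_cab_transfer:
  assumes "\<gamma> \<noteq> 0" "\<gamma>^2 + \<beta>^2/4 = \<alpha>" "open \<Omega>"
    and hol: "cab_transfer \<beta> \<gamma> f holomorphic_on cab_chart \<beta> \<gamma> -` \<Omega>"
  shows "cab_holomorphic_on \<alpha> \<beta> \<Omega> f"
proof -
  let ?g = "cab_transfer \<beta> \<gamma> f" and ?E = "cab_chart_inv \<beta> \<gamma>" and ?S = "cab_chart \<beta> \<gamma> -` \<Omega>"
  have S: "open ?S"
    using assms(3) by (rule open_vimage_cab_chart)
  have f: "f = complex_to_cab \<beta> \<gamma> \<circ> ?g \<circ> ?E"
    by (simp add: fun_eq_iff cab_transfer_def complex_to_cab_cab_to_complex cab_chart_cab_chart_inv assms(1))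
  have E: "?E z \<in> ?S" if "z \<in> \<Omega>" for z
    using that by (simp add: cab_chart_cab_chart_inv assms(1))
  define L where "L = (\<lambda>z k. complex_to_cab \<beta> \<gamma> (deriv ?g (?E z) * ?E k))"
  have D: "(f has_derivative L z) (at z)" if "z \<in> \<Omega>" for z
  proof -
    have "(?g has_derivative (*) (deriv ?g (?E z))) (at (?E z))"
      using holomorphic_derivI[OF hol S E[OF that]] by (simp add: has_field_derivative_def)
    then have "(complex_to_cab \<beta> \<gamma> \<circ> ?g \<circ> ?E has_derivative
                 complex_to_cab \<beta> \<gamma> \<circ> (*) (deriv ?g (?E z)) \<circ> ?E) (at z)"
      by (intro diff_chain_at bounded_linear_imp_has_derivative
          bounded_linear_cab_chart_inv bounded_linear_complex_to_cab)
    then show ?thesis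
      by (subst f) (simp add: L_def comp_def)
  qed
  have "continuous_on \<Omega> (\<lambda>z. deriv ?g (?E z))"
    using holomorphic_on_imp_continuous_on[OF holomorphic_deriv[OF hol S]] E
    by (intro continuous_on_compose2[OF _ linear_continuous_on[OF bounded_linear_cab_chart_inv]]) auto
  then have cont: "continuous_on \<Omega> (\<lambda>z. L z k)" for k
    unfolding L_def
    by (intro continuous_on_compose2[OF linear_continuous_on[OF bounded_linear_complex_to_cab]]
        continuous_intros) auto
  have CR: "cab_cauchy_riemann \<alpha> \<beta> (L z)" if "z \<in> \<Omega>" for z
    using cab_cauchy_riemann_iff_complex_mult[OF has_derivative_linear[OF D[OF that]] assms(1,2)]
    by (auto simp: L_def cab_to_complex_complex_to_cab assms(1))
  show ?thesis
    using D cont CR by (rule cab_holomorphic_onI)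
qed

lemma uniform_limit_cab_transfer:
  assumes "uniform_limit (cab_chart \<beta> \<gamma> ` K) fs f F"
  shows "uniform_limit K (\<lambda>n. cab_transfer \<beta> \<gamma> (fs n)) (cab_transfer \<beta> \<gamma> f) F"
  using bounded_linear.uniform_limit[OF bounded_linear_cab_to_complex
      uniform_limit_compose'[OF assms, of "cab_chart \<beta> \<gamma>"]]
  by (simp add: cab_transfer_def comp_def)

theorem theorem1:
  fixes \<alpha> \<beta> :: real
    and \<Omega> :: "(real \<times> real) set"
    and fs :: "nat \<Rightarrow> real \<times> real \<Rightarrow> real \<times> real"
    and f :: "real \<times> real \<Rightarrow> real \<times> real"
  assumes "4 * \<alpha> - \<beta>^2 > 0"
    and "open \<Omega>" and "connected \<Omega>"
    and "\<And>n. cab_holomorphic_on \<alpha> \<beta> \<Omega> (fs n)"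
    and "\<And>K. compact K \<Longrightarrow> K \<subseteq> \<Omega> \<Longrightarrow> uniform_limit K fs f sequentially"
  shows "cab_holomorphic_on \<alpha> \<beta> \<Omega> f"
proof -
  define \<gamma> where "\<gamma> = sqrt (\<alpha> - \<beta>^2/4)"
  have \<gamma>: "\<gamma> \<noteq> 0" "\<gamma>^2 + \<beta>^2/4 = \<alpha>"
    using assms(1) by (simp_all add: \<gamma>_def)
  let ?S = "cab_chart \<beta> \<gamma> -` \<Omega>"
  have "cab_transfer \<beta> \<gamma> f holomorphic_on ?S"
  proof (rule holomorphic_uniform_sequence)
    show "open ?S"
      using assms(2) by (rule open_vimage_cab_chart)
    show "cab_transfer \<beta> \<gamma> (fs n) holomorphic_on ?S" for n
      by (rule holomorphic_on_cab_transfer[OF \<gamma> assms(2,4)])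
    fix w assume "w \<in> ?S"
    then obtain d where d: "d > 0" "cball w d \<subseteq> ?S"
      using \<open>open ?S\<close> open_contains_cball by blast
    have "compact (cab_chart \<beta> \<gamma> ` cball w d)"
      by (intro compact_continuous_image linear_continuous_on bounded_linear_cab_chart compact_cball)
    moreover have "cab_chart \<beta> \<gamma> ` cball w d \<subseteq> \<Omega>"
      using d(2) by blast
    ultimately show "\<exists>d>0. cball w d \<subseteq> ?S \<and>
        uniform_limit (cball w d) (\<lambda>n. cab_transfer \<beta> \<gamma> (fs n)) (cab_transfer \<beta> \<gamma> f) sequentially"
      using d uniform_limit_cab_transfer[OF assms(5)] by blast
  qed
  then show ?thesis
    by (rule cab_holomorphic_on_of_cab_transfer[OF \<gamma> assms(2)])
qed

end
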